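(* Let $k\ge 3$ and $\ell\ge 1$ be integers. For all integers $n$ with $$n\ge 2\frac{(\ell(k-1)+k)^4-1}{(\ell+1)(k-1)}-1,$$ we have $px_{k,\ell}(K_n)=2$.
   Context: All graphs are finite, simple and undirected. An edge-coloring of a graph may assign the same color to adjacent edges. A tree $T$ in an edge-colored graph is a proper tree if no two adjacent edges of $T$ receive the same color. For $S\subseteq V(G)$ with $|S|\ge 2$, an $S$-tree is a tree in $G$ containing all vertices of $S$. $S$-trees $T_1,\dots,T_\ell$ are internally disjoint if $E(T_i)\cap E(T_j)=\emptyset$ and $V(T_i)\cap V(T_j)=S$ for all $i\ne j$. For a connected graph $G$ of order $n$ and integers $k,\ell$ with $2\le k\le n$ and $1\le \ell\le \kappa_k(G)$ (where $\kappa_k(G)$ is the minimum, over all $k$-subsets $S$ of $V(G)$, of the maximum number of internally disjoint $S$-trees), the $(k,\ell)$-proper index $px_{k,\ell}(G)$ is the minimum number of colors in an edge-coloring of $G$ such that for every $k$-subset $S$ of $V(G)$ there exist $\ell$ internally disjoint proper $S$-trees. *)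

theory Defs
  imports Complex_Main
begin

definition is_graph :: "'a set \<Rightarrow> 'a set set \<Rightarrow> bool" where
  "is_graph V E \<longleftrightarrow> finite V \<and> (\<forall>e\<in>E. e \<subseteq> V \<and> card e = 2)"

definition complete_graph :: "nat \<Rightarrow> nat set \<times> nat set set" where
  "complete_graph n = ({..<n}, {e. e \<subseteq> {..<n} \<and> card e = 2})"

definition sub_connected :: "'a set \<Rightarrow> 'a set set \<Rightarrow> bool" where
  "sub_connected VT ET \<longleftrightarrow>
     (\<forall>u\<in>VT. \<forall>v\<in>VT. (\<lambda>x y. {x, y} \<in> ET)\<^sup>*\<^sup>* u v)"

definition has_cycle :: "'a set set \<Rightarrow> bool" where
  "has_cycle ET \<longleftrightarrow> (\<exists>vs. length vs \<ge> 3 \<and> distinct vs \<and>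
      (\<forall>i < length vs - 1. {vs ! i, vs ! Suc i} \<in> ET) \<and> {last vs, hd vs} \<in> ET)"

definition is_tree_in :: "'a set \<Rightarrow> 'a set set \<Rightarrow> 'a set \<Rightarrow> 'a set set \<Rightarrow> bool" where
  "is_tree_in V E VT ET \<longleftrightarrow> VT \<subseteq> V \<and> ET \<subseteq> E \<and> VT \<noteq> {} \<and>
     (\<forall>e\<in>ET. e \<subseteq> VT) \<and> sub_connected VT ET \<and> \<not> has_cycle ET"

definition proper_edges :: "('a set \<Rightarrow> nat) \<Rightarrow> 'a set set \<Rightarrow> bool" where
  "proper_edges c ET \<longleftrightarrow> (\<forall>e\<in>ET. \<forall>f\<in>ET. e \<noteq> f \<and> e \<inter> f \<noteq> {} \<longrightarrow> c e \<noteq> c f)"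

definition proper_S_tree :: "'a set \<Rightarrow> 'a set set \<Rightarrow> ('a set \<Rightarrow> nat) \<Rightarrow> 'a set
     \<Rightarrow> 'a set \<times> 'a set set \<Rightarrow> bool" where
  "proper_S_tree V E c S T \<longleftrightarrow> is_tree_in V E (fst T) (snd T) \<and> S \<subseteq> fst T \<and>
     proper_edges c (snd T)"

definition has_disjoint_proper_S_trees :: "'a set \<Rightarrow> 'a set set \<Rightarrow> ('a set \<Rightarrow> nat)
     \<Rightarrow> 'a set \<Rightarrow> nat \<Rightarrow> bool" where
  "has_disjoint_proper_S_trees V E c S l \<longleftrightarrow>
     (\<exists>T :: nat \<Rightarrow> 'a set \<times> 'a set set.
        (\<forall>i<l. proper_S_tree V E c S (T i)) \<and>
        (\<forall>i<l. \<forall>j<l. i \<noteq> j \<longrightarrow> snd (T i) \<inter> snd (T j) = {} \<and> fst (T i) \<inter> fst (T j) = S))"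

definition kl_proper_colouring :: "'a set \<Rightarrow> 'a set set \<Rightarrow> nat \<Rightarrow> nat \<Rightarrow> nat
     \<Rightarrow> ('a set \<Rightarrow> nat) \<Rightarrow> bool" where
  "kl_proper_colouring V E k l m c \<longleftrightarrow> (\<forall>e\<in>E. c e < m) \<and>
     (\<forall>S. S \<subseteq> V \<and> card S = k \<longrightarrow> has_disjoint_proper_S_trees V E c S l)"

definition px :: "'a set \<Rightarrow> 'a set set \<Rightarrow> nat \<Rightarrow> nat \<Rightarrow> nat" where
  "px V E k l = (LEAST m. \<exists>c. kl_proper_colouring V E k l m c)"

end

theory Submission
  imports Defs
begin

text \<open>Colour the edge \<open>{u, v}\<close> of \<open>K\<^sub>n\<close> by the parity of \<open>u + v\<close>. A path whose vertex
  parities follow the pattern 0, 0, 1, 1, 0, 0, 1, 1, \<dots> is then properly coloured. Given a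
  \<open>k\<close>-set \<open>S\<close>, each of \<open>l\<close> such paths visits every vertex of \<open>S\<close> at an even position of
  the right parity and fills all other positions, in particular all odd ones, with vertices
  used by no other path; hence the paths are internally disjoint proper \<open>S\<close>-trees. The bound
  on \<open>n\<close> implies \<open>n \<ge> 8kl + 2k\<close>, which leaves enough unused vertices of each parity.
  One colour never suffices: a proper tree with a single colour is a matching, so it spans
  at most two vertices, fewer than \<open>k \<ge> 3\<close>.\<close>

definition path_edges :: "(nat \<Rightarrow> 'a) \<Rightarrow> nat \<Rightarrow> 'a set set" where
  "path_edges p L = {{p j, p (Suc j)} | j. Suc j < L}"

lemma path_edgesE:
  assumes "e \<in> path_edges p L"
  obtains j where "Suc j < L" "e = {p j, p (Suc j)}"
  using assms unfolding path_edges_def by blast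

lemma path_edge_subset_image: "e \<in> path_edges p L \<Longrightarrow> e \<subseteq> p ` {..<L}"
  by (erule path_edgesE) auto

lemma path_edges_neighbour:
  assumes inj: "inj_on p {..<L}" and "i < L" and "{p i, x} \<in> path_edges p L"
  shows "x = p (Suc i) \<or> (\<exists>j. i = Suc j \<and> x = p j)"
proof -
  obtain j where j: "Suc j < L" "{p i, x} = {p j, p (Suc j)}"
    using assms(3) by (rule path_edgesE)
  then have "(p i = p j \<and> x = p (Suc j)) \<or> (p i = p (Suc j) \<and> x = p j)"
    by (auto simp: doubleton_eq_iff)
  with inj \<open>i < L\<close> j(1) show ?thesis
    by (auto dest: inj_onD)
qed

lemma has_cycleE:
  assumes "has_cycle ET"
  obtains vs where "length vs \<ge> 3" "distinct vs"
    "\<And>i. i < length vs \<Longrightarrow> {vs ! i, vs ! (Suc i mod length vs)} \<in> ET"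
proof -
  obtain vs where len: "length vs \<ge> 3" and dist: "distinct vs"
    and cons: "\<forall>i < length vs - 1. {vs ! i, vs ! Suc i} \<in> ET"
    and close: "{last vs, hd vs} \<in> ET"
    using assms unfolding has_cycle_def by blast
  have succ: "{vs ! i, vs ! (Suc i mod length vs)} \<in> ET" if "i < length vs" for i
  proof (cases "Suc i < length vs")
    case True
    then show ?thesis using cons by simp
  next
    case False
    then have "i = length vs - 1" "Suc i = length vs" using that by auto
    moreover have "vs \<noteq> []" using len by auto
    then have "last vs = vs ! (length vs - 1)" "hd vs = vs ! 0"
      by (simp_all add: last_conv_nth hd_conv_nth)
    ultimately show ?thesis using close by (simp add: insert_commute)
  qed
  then show ?thesis using that[OF len dist] by blast
qed

lemma has_cycle_two_neighbours:
  assumes "has_cycle ET"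
  obtains C where "C \<noteq> {}" "\<forall>v\<in>C. \<exists>u\<in>C. \<exists>w\<in>C. u \<noteq> w \<and> {v, u} \<in> ET \<and> {v, w} \<in> ET"
proof -
  obtain vs where len: "length vs \<ge> 3" and dist: "distinct vs"
    and succ: "\<And>i. i < length vs \<Longrightarrow> {vs ! i, vs ! (Suc i mod length vs)} \<in> ET"
    using assms by (rule has_cycleE) blast
  define m where "m = length vs"
  \<comment> \<open>the neighbours of \<open>vs ! q\<close> are its cyclic successor and predecessor \<open>vs ! r\<close>\<close>
  have "\<exists>u\<in>set vs. \<exists>w\<in>set vs. u \<noteq> w \<and> {v, u} \<in> ET \<and> {v, w} \<in> ET" if "v \<in> set vs" for v
  proof -
    obtain q where q: "q < m" "v = vs ! q" using \<open>v \<in> set vs\<close> by (auto simp: m_def in_set_conv_nth)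
    define r where "r = (q + m - 1) mod m"
    have "Suc (q + m - 1) = q + m" using len by (simp add: m_def)
    then have "Suc r mod m = (q + m) mod m" by (simp add: r_def mod_Suc_eq)
    then have r: "r < m" "Suc r mod m = q" using q by (auto simp: r_def)
    have "Suc q mod m \<noteq> r"
    proof
      assume "Suc q mod m = r"
      then have "Suc (Suc q) mod m = q" using r by (metis mod_Suc_eq)
      then show False using q len by (simp add: m_def mod_if split: if_splits)
    qed
    moreover have sq: "Suc q mod m < m" using q(1) by simp
    ultimately have "vs ! (Suc q mod m) \<noteq> vs ! r"
      using nth_eq_iff_index_eq[OF dist, of "Suc q mod m" r] r(1) by (simp add: m_def)
    moreover have "{v, vs ! (Suc q mod m)} \<in> ET" "{v, vs ! r} \<in> ET"
      using succ[of q] succ[of r] q r by (simp_all add: m_def insert_commute)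
    moreover have "vs ! (Suc q mod m) \<in> set vs" "vs ! r \<in> set vs"
      using sq r(1) by (simp_all add: m_def)
    ultimately show ?thesis by (intro bexI conjI)
  qed
  moreover have "set vs \<noteq> {}" using len by auto
  ultimately show ?thesis using that by blast
qed

lemma path_edges_acyclic:
  assumes inj: "inj_on p {..<L}"
  shows "\<not> has_cycle (path_edges p L)"
proof
  assume "has_cycle (path_edges p L)"
  then obtain C where "C \<noteq> {}" and two: "\<forall>v\<in>C. \<exists>u\<in>C. \<exists>w\<in>C. u \<noteq> w \<and>
      {v, u} \<in> path_edges p L \<and> {v, w} \<in> path_edges p L"
    by (rule has_cycle_two_neighbours)
  have "C \<subseteq> p ` {..<L}"
  proof
    fix v assume "v \<in> C"
    then obtain u where "{v, u} \<in> path_edges p L" using two by blast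
    then show "v \<in> p ` {..<L}" by (auto dest: path_edge_subset_image)
  qed
  with \<open>C \<noteq> {}\<close> have "\<exists>i. i < L \<and> p i \<in> C" by blast
  define i where "i = (LEAST i. i < L \<and> p i \<in> C)"
  have i: "i < L" "p i \<in> C" using LeastI_ex[OF \<open>\<exists>i. i < L \<and> p i \<in> C\<close>] by (simp_all add: i_def)
  \<comment> \<open>a vertex of the cycle with least position on the path has only one neighbour in the cycle\<close>
  have only: "x = p (Suc i)" if "x \<in> C" "{p i, x} \<in> path_edges p L" for x
  proof -
    have "\<not> (j < L \<and> p j \<in> C)" if "j < i" for j
      using not_less_Least[OF that[unfolded i_def]] by (simp add: i_def)
    with path_edges_neighbour[OF inj i(1) that(2)] \<open>x \<in> C\<close> i(1) show ?thesis
      by (metis Suc_lessD lessI)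
  qed
  from two i(2) obtain u w where "u \<in> C" "w \<in> C" "u \<noteq> w"
      "{p i, u} \<in> path_edges p L" "{p i, w} \<in> path_edges p L"
    by blast
  then show False using only by metis
qed

lemma path_edges_connected: "sub_connected (p ` {..<L}) (path_edges p L)"
proof -
  let ?R = "\<lambda>x y. {x, y} \<in> path_edges p L"
  have "?R\<^sup>*\<^sup>* (p 0) (p j) \<and> ?R\<^sup>*\<^sup>* (p j) (p 0)" if "j < L" for j
    using that
  proof (induction j)
    case (Suc j)
    then have "?R (p j) (p (Suc j))" "?R (p (Suc j)) (p j)"
      unfolding path_edges_def by (auto simp: insert_commute)
    with Suc show ?case
      by (meson Suc_lessD converse_rtranclp_into_rtranclp rtranclp.rtrancl_into_rtrancl)
  qed simp
  then show ?thesis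
    unfolding sub_connected_def by (auto intro: rtranclp_trans)
qed

lemma path_is_tree_in:
  assumes "inj_on p {..<L}" "0 < L" "p ` {..<L} \<subseteq> V" "path_edges p L \<subseteq> E"
  shows "is_tree_in V E (p ` {..<L}) (path_edges p L)"
  unfolding is_tree_in_def
  using assms path_edges_acyclic[OF assms(1)] path_edges_connected[of p L]
    path_edge_subset_image[of _ p L]
  by auto

lemma path_edges_adjacent:
  assumes inj: "inj_on p {..<L}" and "e \<in> path_edges p L" "f \<in> path_edges p L"
    and "e \<noteq> f" "e \<inter> f \<noteq> {}"
  obtains j where "Suc (Suc j) < L"
    "{e, f} = {{p j, p (Suc j)}, {p (Suc j), p (Suc (Suc j))}}"
proof -
  obtain a b where a: "Suc a < L" "e = {p a, p (Suc a)}" and b: "Suc b < L" "f = {p b, p (Suc b)}"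
    using assms(2,3) by (meson path_edgesE)
  have eq: "x = y" if "x < L" "y < L" "p x = p y" for x y
    using inj that by (auto dest: inj_onD)
  have "a \<noteq> b" using assms(4) a b by auto
  moreover obtain x y where "x \<in> {a, Suc a}" "y \<in> {b, Suc b}" "p x = p y"
    using assms(5) a(2) b(2) by blast
  then have "x = y" using a(1) b(1) by (intro eq) auto
  with \<open>x \<in> {a, Suc a}\<close> \<open>y \<in> {b, Suc b}\<close> have "a = b \<or> a = Suc b \<or> Suc a = b"
    by auto
  ultimately consider "b = Suc a" | "a = Suc b" by auto
  then show ?thesis
  proof cases
    case 1
    then show ?thesis using that[of a] a b by simp
  next
    case 2
    then show ?thesis using that[of b] a b by (simp add: insert_commute)
  qed
qed

definition sum_parity :: "nat set \<Rightarrow> nat" where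
  "sum_parity e = (\<Sum>e) mod 2"

lemma path_edges_proper_sum_parity:
  assumes inj: "inj_on p {..<L}" and par: "\<And>j. j < L \<Longrightarrow> p j mod 2 = j div 2 mod 2"
  shows "proper_edges sum_parity (path_edges p L)"
  unfolding proper_edges_def
proof (intro ballI impI)
  fix e f assume "e \<in> path_edges p L" "f \<in> path_edges p L" "e \<noteq> f \<and> e \<inter> f \<noteq> {}"
  then obtain j where j: "Suc (Suc j) < L"
    and ef: "{e, f} = {{p j, p (Suc j)}, {p (Suc j), p (Suc (Suc j))}}"
    using path_edges_adjacent[OF inj] by metis
  have edge: "sum_parity {p i, p (Suc i)} = (p i + p (Suc i)) mod 2" if "Suc i < L" for i
  proof -
    have "p i \<noteq> p (Suc i)" using inj_onD[OF inj, of i "Suc i"] that by auto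
    then show ?thesis by (simp add: sum_parity_def)
  qed
  \<comment> \<open>positions \<open>j\<close> and \<open>j + 2\<close> carry vertices of opposite parity\<close>
  have "Suc (Suc j) div 2 mod 2 \<noteq> j div 2 mod 2" by presburger
  then have "p j mod 2 \<noteq> p (Suc (Suc j)) mod 2"
    using par[of j] par[OF j] j by simp
  then have "(p j + p (Suc j)) mod 2 \<noteq> (p (Suc j) + p (Suc (Suc j))) mod 2"
    by (simp add: mod2_eq_if split: if_splits)
  then have "sum_parity {p j, p (Suc j)} \<noteq> sum_parity {p (Suc j), p (Suc (Suc j))}"
    using edge[of j] edge[OF j] j by simp
  with ef \<open>e \<noteq> f \<and> e \<inter> f \<noteq> {}\<close> show "sum_parity e \<noteq> sum_parity f"
    by (auto simp: doubleton_eq_iff)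
qed

lemma paths_imp_disjoint_proper_S_trees:
  fixes P :: "nat \<Rightarrow> nat \<Rightarrow> 'a"
  assumes "0 < L"
    and inj: "\<And>t. t < l \<Longrightarrow> inj_on (P t) {..<L}"
    and vertices: "\<And>t. t < l \<Longrightarrow> P t ` {..<L} \<subseteq> V"
    and edges: "\<And>t. t < l \<Longrightarrow> path_edges (P t) L \<subseteq> E"
    and proper: "\<And>t. t < l \<Longrightarrow> proper_edges c (path_edges (P t) L)"
    and spans: "\<And>t. t < l \<Longrightarrow> S \<subseteq> P t ` {..<L}"
    and leaves_S: "\<And>t e. t < l \<Longrightarrow> e \<in> path_edges (P t) L \<Longrightarrow> \<not> e \<subseteq> S"
    and meet: "\<And>t t'. t < l \<Longrightarrow> t' < l \<Longrightarrow> t \<noteq> t' \<Longrightarrow> P t ` {..<L} \<inter> P t' ` {..<L} \<subseteq> S"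
  shows "has_disjoint_proper_S_trees V E c S l"
  unfolding has_disjoint_proper_S_trees_def
proof (intro exI conjI allI impI)
  let ?T = "\<lambda>t. (P t ` {..<L}, path_edges (P t) L)"
  fix i j assume ij: "i < l" "j < l" "i \<noteq> j"
  show "fst (?T i) \<inter> fst (?T j) = S"
    using meet[OF ij] spans[OF ij(1)] spans[OF ij(2)] by auto
  \<comment> \<open>a common edge would have an endpoint outside \<open>S\<close> on both paths\<close>
  show "snd (?T i) \<inter> snd (?T j) = {}"
  proof (rule ccontr)
    assume "snd (?T i) \<inter> snd (?T j) \<noteq> {}"
    then obtain e where "e \<in> path_edges (P i) L" "e \<in> path_edges (P j) L" by auto
    with path_edge_subset_image have "e \<subseteq> P i ` {..<L} \<inter> P j ` {..<L}" by blast
    with meet[OF ij] leaves_S[OF ij(1) \<open>e \<in> path_edges (P i) L\<close>] show False by blast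
  qed
next
  fix i assume "i < l"
  then show "proper_S_tree V E c S (P i ` {..<L}, path_edges (P i) L)"
    unfolding proper_S_tree_def
    using path_is_tree_in[OF inj \<open>0 < L\<close> vertices edges] proper spans by simp
qed

lemma card_parity_class_ge:
  fixes q :: nat assumes "q < 2"
  shows "n div 2 \<le> card {x. x < n \<and> x mod 2 = q}"
proof -
  have "(\<lambda>i. 2 * i + q) ` {..<n div 2} \<subseteq> {x. x < n \<and> x mod 2 = q}"
    using assms by auto
  moreover have "inj_on (\<lambda>i. 2 * i + q) {..<n div 2}" by (simp add: inj_on_def)
  ultimately show ?thesis
    using card_inj_on_le[of _ "{..<n div 2}"] by fastforce
qed

lemma fresh_vertices_with_parity:
  fixes I :: "'b set" and \<pi> :: "'b \<Rightarrow> nat" and S :: "nat set"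
  assumes "finite I" "finite S" "card I + card S \<le> n div 2" "\<And>i. i \<in> I \<Longrightarrow> \<pi> i < 2"
  obtains F where "inj_on F I" "\<And>i. i \<in> I \<Longrightarrow> F i < n \<and> F i \<notin> S \<and> F i mod 2 = \<pi> i"
proof -
  define R where "R q = {x. x < n \<and> x mod 2 = q} - S" for q :: nat
  have "card I \<le> card (R q)" if "q < 2" for q
    using card_parity_class_ge[OF that, of n] diff_card_le_card_Diff[OF assms(2), of "{x. x < n \<and> x mod 2 = q}"]
      assms(3) by (simp add: R_def)
  moreover have "finite (R q)" for q by (simp add: R_def)
  ultimately have injection: "\<exists>f. f ` I \<subseteq> R q \<and> inj_on f I" if "q < 2" for q
    using card_le_inj[OF assms(1)] that by blast
  obtain f0 where f0: "f0 ` I \<subseteq> R 0" "inj_on f0 I" using injection[of 0] by auto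
  obtain f1 where f1: "f1 ` I \<subseteq> R 1" "inj_on f1 I" using injection[of 1] by auto
  define F where "F i = (if \<pi> i = 0 then f0 i else f1 i)" for i
  have F: "F i < n \<and> F i \<notin> S \<and> F i mod 2 = \<pi> i" if "i \<in> I" for i
    using f0(1) f1(1) assms(4)[OF that] that by (auto simp: F_def R_def)
  \<comment> \<open>equal values have equal parity, hence come from the same injection\<close>
  have "inj_on F I"
  proof (rule inj_onI)
    fix i i' assume "i \<in> I" "i' \<in> I" "F i = F i'"
    with F have "\<pi> i = \<pi> i'" by metis
    with \<open>F i = F i'\<close> show "i = i'"
      using inj_onD[OF f0(2)] inj_onD[OF f1(2)] \<open>i \<in> I\<close> \<open>i' \<in> I\<close> by (auto simp: F_def split: if_splits)
  qed
  with F that show ?thesis by blast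
qed

text \<open>Positions \<open>4i, \<dots>, 4i + 3\<close> form block \<open>i\<close>. The \<open>i\<close>-th listed vertex takes the even
  position of its block whose label \<open>j div 2 mod 2\<close> is its own parity (offset 0 or 2); all
  other positions are filled by \<open>g\<close>.\<close>

definition is_slot :: "nat list \<Rightarrow> nat \<Rightarrow> bool" where
  "is_slot ss j \<longleftrightarrow> even j \<and> j div 2 mod 2 = ss ! (j div 4) mod 2"

definition parity_path :: "nat list \<Rightarrow> (nat \<Rightarrow> nat) \<Rightarrow> nat \<Rightarrow> nat" where
  "parity_path ss g j = (if is_slot ss j then ss ! (j div 4) else g j)"

lemma parity_path_odd: "odd j \<Longrightarrow> parity_path ss g j = g j"
  by (simp add: parity_path_def is_slot_def)

lemma parity_path_mod_2:
  assumes "\<And>j. j < 4 * length ss \<Longrightarrow> g j mod 2 = j div 2 mod 2" and "j < 4 * length ss"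
  shows "parity_path ss g j mod 2 = j div 2 mod 2"
  using assms by (simp add: parity_path_def is_slot_def)

lemma set_subset_parity_path: "set ss \<subseteq> parity_path ss g ` {..<4 * length ss}"
proof
  fix s assume "s \<in> set ss"
  then obtain i where i: "i < length ss" "s = ss ! i" by (auto simp: in_set_conv_nth)
  define j where "j = 4 * i + 2 * (s mod 2)"
  have "j div 4 = i" "j div 2 = 2 * i + s mod 2" "even j" by (simp_all add: j_def)
  then have "parity_path ss g j = s" "j < 4 * length ss"
    using i by (simp_all add: parity_path_def is_slot_def j_def)
  then show "s \<in> parity_path ss g ` {..<4 * length ss}" by force
qed

lemma parity_path_in_set_iff:
  assumes "\<And>j. j < 4 * length ss \<Longrightarrow> g j \<notin> set ss" and "j < 4 * length ss"
  shows "parity_path ss g j \<in> set ss \<longleftrightarrow> is_slot ss j"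
  using assms by (simp add: parity_path_def)

lemma inj_on_parity_path:
  assumes "distinct ss" and inj: "inj_on g {..<4 * length ss}"
    and fresh: "\<And>j. j < 4 * length ss \<Longrightarrow> g j \<notin> set ss"
  shows "inj_on (parity_path ss g) {..<4 * length ss}"
proof (rule inj_onI)
  fix j j' assume j: "j \<in> {..<4 * length ss}" "j' \<in> {..<4 * length ss}"
    and eq: "parity_path ss g j = parity_path ss g j'"
  consider "is_slot ss j" "is_slot ss j'" | "\<not> is_slot ss j" "\<not> is_slot ss j'"
    | "is_slot ss j \<noteq> is_slot ss j'" by blast
  then show "j = j'"
  proof cases
    case 1
    with eq j have "j div 4 = j' div 4"
      by (simp add: parity_path_def nth_eq_iff_index_eq[OF assms(1)])
    moreover from 1 this have "j mod 4 = j' mod 4"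
      using mod_mult2_eq[of j 2 2] mod_mult2_eq[of j' 2 2] by (simp add: is_slot_def)
    ultimately show ?thesis by (metis div_mod_decomp)
  next
    case 2
    with eq j show ?thesis by (simp add: parity_path_def inj_onD[OF inj])
  next
    case 3
    with eq j parity_path_in_set_iff[of ss g, OF fresh] show ?thesis by (metis lessThan_iff)
  qed
qed

lemma path_edges_subset_complete:
  assumes "inj_on p {..<L}" "p ` {..<L} \<subseteq> {..<n}"
  shows "path_edges p L \<subseteq> {e. e \<subseteq> {..<n} \<and> card e = 2}"
proof
  fix e assume "e \<in> path_edges p L"
  then obtain j where j: "Suc j < L" "e = {p j, p (Suc j)}" by (rule path_edgesE)
  then have "p j \<noteq> p (Suc j)" using inj_onD[OF assms(1), of j "Suc j"] by auto
  moreover have "e \<subseteq> {..<n}"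
    using path_edge_subset_image[OF \<open>e \<in> path_edges p L\<close>] assms(2) by blast
  ultimately show "e \<in> {e. e \<subseteq> {..<n} \<and> card e = 2}" using j(2) by simp
qed

lemma private_parity_paths:
  assumes S: "S \<subseteq> {..<n}" "card S = k" and big: "8 * k * l + 2 * k \<le> n"
  obtains P :: "nat \<Rightarrow> nat \<Rightarrow> nat" where
    "\<And>t. t < l \<Longrightarrow> inj_on (P t) {..<4 * k}"
    "\<And>t j. t < l \<Longrightarrow> j < 4 * k \<Longrightarrow> P t j < n \<and> P t j mod 2 = j div 2 mod 2"
    "\<And>t. S \<subseteq> P t ` {..<4 * k}"
    "\<And>t j. t < l \<Longrightarrow> j < 4 * k \<Longrightarrow> odd j \<Longrightarrow> P t j \<notin> S"
    "\<And>t t'. t < l \<Longrightarrow> t' < l \<Longrightarrow> t \<noteq> t' \<Longrightarrow> P t ` {..<4 * k} \<inter> P t' ` {..<4 * k} \<subseteq> S"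
proof -
  have "finite S" using S(1) finite_subset by blast
  define ss where "ss = sorted_list_of_set S"
  have ss: "distinct ss" "set ss = S" "length ss = k" using S \<open>finite S\<close> by (simp_all add: ss_def)
  define L where "L = 4 * k"
  let ?I = "{..<l} \<times> {..<L}"
  have "2 * (card ?I + card S) \<le> n" using S big by (simp add: L_def algebra_simps)
  then have "card ?I + card S \<le> n div 2" by (metis div_le_mono nonzero_mult_div_cancel_left zero_neq_numeral)
  then obtain F where F_inj: "inj_on F ?I"
    and F: "\<And>i. i \<in> ?I \<Longrightarrow> F i < n \<and> F i \<notin> S \<and> F i mod 2 = snd i div 2 mod 2"
    using fresh_vertices_with_parity[of ?I S n "\<lambda>i. snd i div 2 mod 2"] \<open>finite S\<close> by auto
  define P where "P t = parity_path ss (\<lambda>j. F (t, j))" for t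
  have P_cases: "P t j \<in> S \<or> P t j = F (t, j)" if "j < L" for t j
    using that ss(2,3) by (auto simp: P_def L_def parity_path_def)
  show ?thesis
  proof (rule that[of P, folded L_def])
    fix t assume t: "t < l"
    have "inj_on (\<lambda>j. F (t, j)) {..<L}"
      using t by (intro inj_onI) (auto dest: inj_onD[OF F_inj])
    with inj_on_parity_path[OF ss(1)] F t show "inj_on (P t) {..<L}"
      by (simp add: P_def L_def ss)
    fix j assume j: "j < L"
    show "P t j < n \<and> P t j mod 2 = j div 2 mod 2"
      using P_cases[OF j, of t] F t j S(1) parity_path_mod_2[of ss "\<lambda>j. F (t, j)"]
      by (auto simp: P_def L_def ss(3))
    show "odd j \<Longrightarrow> P t j \<notin> S"
      using F t j by (simp add: P_def parity_path_odd)
  next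
    fix t
    show "S \<subseteq> P t ` {..<L}"
      using set_subset_parity_path[of ss] ss by (simp add: P_def L_def)
  next
    fix t t' assume t: "t < l" "t' < l" "t \<noteq> t'"
    show "P t ` {..<L} \<inter> P t' ` {..<L} \<subseteq> S"
    proof
      fix x assume "x \<in> P t ` {..<L} \<inter> P t' ` {..<L}"
      then obtain j j' where j: "j < L" "j' < L" "x = P t j" "x = P t' j'" by auto
      show "x \<in> S"
      proof (rule ccontr)
        assume "x \<notin> S"
        then have "F (t, j) = F (t', j')" using P_cases[OF j(1), of t] P_cases[OF j(2), of t'] j by auto
        then have "(t, j) = (t', j')" using inj_onD[OF F_inj] t j(1,2) by blast
        with t(3) show False by simp
      qed
    qed
  qed
qed

lemma complete_graph_sum_parity_colouring:
  assumes "1 \<le> k" and big: "8 * k * l + 2 * k \<le> n"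
  shows "kl_proper_colouring {..<n} {e. e \<subseteq> {..<n} \<and> card e = 2} k l 2 sum_parity"
  unfolding kl_proper_colouring_def
proof (intro conjI allI impI ballI)
  fix S :: "nat set" assume "S \<subseteq> {..<n} \<and> card S = k"
  then obtain P where P_inj: "\<And>t. t < l \<Longrightarrow> inj_on (P t) {..<4 * k}"
    and P: "\<And>t j. t < l \<Longrightarrow> j < 4 * k \<Longrightarrow> P t j < n \<and> P t j mod 2 = j div 2 mod 2"
    and spans: "\<And>t. S \<subseteq> P t ` {..<4 * k}"
    and odd_private: "\<And>t j. t < l \<Longrightarrow> j < 4 * k \<Longrightarrow> odd j \<Longrightarrow> P t j \<notin> S"
    and meet: "\<And>t t'. t < l \<Longrightarrow> t' < l \<Longrightarrow> t \<noteq> t' \<Longrightarrow> P t ` {..<4 * k} \<inter> P t' ` {..<4 * k} \<subseteq> S"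
    using private_parity_paths big by blast
  show "has_disjoint_proper_S_trees {..<n} {e. e \<subseteq> {..<n} \<and> card e = 2} sum_parity S l"
  proof (rule paths_imp_disjoint_proper_S_trees[where P = P and L = "4 * k", OF _ P_inj _ _ _ spans _ meet])
    show "0 < 4 * k" using \<open>1 \<le> k\<close> by simp
    fix t assume t: "t < l"
    show vertices: "P t ` {..<4 * k} \<subseteq> {..<n}" using P t by auto
    show "path_edges (P t) (4 * k) \<subseteq> {e. e \<subseteq> {..<n} \<and> card e = 2}"
      using path_edges_subset_complete[OF P_inj[OF t] vertices] .
    show "proper_edges sum_parity (path_edges (P t) (4 * k))"
      using path_edges_proper_sum_parity[OF P_inj[OF t]] P t by simp
    \<comment> \<open>one endpoint of every edge sits at an odd position\<close>
    show "\<not> e \<subseteq> S" if e: "e \<in> path_edges (P t) (4 * k)" for e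
    proof -
      obtain j where j: "Suc j < 4 * k" "e = {P t j, P t (Suc j)}" using e by (rule path_edgesE)
      have "odd j \<or> odd (Suc j)" by simp
      with j odd_private[OF t] show ?thesis by fastforce
    qed
  qed
qed (simp add: sum_parity_def)

lemma monochromatic_proper_subgraph_small:
  assumes conn: "sub_connected VT ET" and proper: "proper_edges c ET"
    and mono: "\<And>e f. e \<in> ET \<Longrightarrow> f \<in> ET \<Longrightarrow> c e = c f" and "x \<in> VT"
  obtains y where "VT \<subseteq> {x, y}"
proof (cases "VT \<subseteq> {x}")
  case False
  let ?R = "\<lambda>u v. {u, v} \<in> ET"
  from False obtain v where "v \<in> VT" "v \<noteq> x" by blast
  with conn \<open>x \<in> VT\<close> have "?R\<^sup>*\<^sup>* x v" unfolding sub_connected_def by blast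
  from this \<open>v \<noteq> x\<close> obtain y where y: "?R x y"
    by (cases rule: converse_rtranclpE) auto
  \<comment> \<open>a proper colouring with one colour makes \<open>ET\<close> a matching\<close>
  have matching: "e = f" if "e \<in> ET" "f \<in> ET" "e \<inter> f \<noteq> {}" for e f
  proof (rule ccontr)
    assume "e \<noteq> f"
    with proper that have "c e \<noteq> c f" unfolding proper_edges_def by blast
    with mono[OF that(1,2)] show False by simp
  qed
  have "z \<in> {x, y}" if "?R\<^sup>*\<^sup>* x z" for z
    using that
  proof (induction rule: rtranclp_induct)
    case (step z w)
    then have "{z, w} = {x, y}" by (intro matching[OF step.hyps(2) y]) auto
    then show ?case by auto
  qed simp
  with conn \<open>x \<in> VT\<close> have "VT \<subseteq> {x, y}" unfolding sub_connected_def by blast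
  then show ?thesis by (rule that)
qed (use that in blast)

lemma kl_proper_colouring_ge_2:
  assumes "3 \<le> k" "1 \<le> l" "S \<subseteq> V" "card S = k"
    and col: "kl_proper_colouring V E k l m c"
  shows "2 \<le> m"
proof (rule ccontr)
  assume "\<not> 2 \<le> m"
  with col have colour0: "c e = 0" if "e \<in> E" for e
    using that unfolding kl_proper_colouring_def by fastforce
  from col assms(3,4) have "has_disjoint_proper_S_trees V E c S l"
    unfolding kl_proper_colouring_def by blast
  then obtain T where "\<forall>i<l. proper_S_tree V E c S (T i)"
    unfolding has_disjoint_proper_S_trees_def by blast
  with assms(2) have "proper_S_tree V E c S (T 0)" by simp
  moreover obtain VT ET where "T 0 = (VT, ET)" by fastforce
  ultimately have tree: "is_tree_in V E VT ET" "S \<subseteq> VT" "proper_edges c ET"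
    unfolding proper_S_tree_def by simp_all
  have "sub_connected VT ET" "\<And>e. e \<in> ET \<Longrightarrow> c e = 0"
    using tree(1) colour0 unfolding is_tree_in_def by auto
  moreover have "S \<noteq> {}" using assms(1,4) by auto
  then obtain x where "x \<in> S" by blast
  ultimately obtain y where "VT \<subseteq> {x, y}"
    using monochromatic_proper_subgraph_small[of VT ET c x] tree(2,3) by auto
  with tree(2) have "card S \<le> card {x, y}" by (intro card_mono) auto
  also have "\<dots> \<le> 2" by (simp add: card_insert_le_m1)
  finally show False using assms(1,4) by simp
qed

lemma order_bound_linear:
  fixes k l n :: nat
  assumes "k \<ge> 3"
    and bound: "real n \<ge> 2 * ((real l * (real k - 1) + real k) ^ 4 - 1)
                    / ((real l + 1) * (real k - 1)) - 1"
  shows "8 * k * l + 2 * k \<le> n"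
proof -
  define M where "M = real l * (real k - 1) + real k"
  have "real k \<ge> 3" "real l * (real k - 1) \<ge> 0" using assms(1) by simp_all
  then have M: "M \<ge> 3" unfolding M_def by linarith
  have denom: "(real l + 1) * (real k - 1) = M - 1" by (simp add: M_def algebra_simps)
  have "M ^ 4 - 1 = (M - 1) * (M ^ 3 + M ^ 2 + M + 1)" by algebra
  then have quot: "(M ^ 4 - 1) / (M - 1) = M ^ 3 + M ^ 2 + M + 1" using M by simp
  have "real n \<ge> 2 * ((M ^ 4 - 1) / (M - 1)) - 1"
    using bound unfolding denom M_def[symmetric] by simp
  then have n: "real n \<ge> 2 * M ^ 3 + 2 * M ^ 2 + 2 * M + 1"
    unfolding quot by (simp add: algebra_simps)
  have "M ^ 2 \<ge> 3 ^ 2" using M by (intro power_mono) auto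
  then have "M ^ 3 \<ge> 9 * M" using M by (simp add: power3_eq_cube power2_eq_square mult.commute)
  with n M have "real n \<ge> 18 * M" using zero_le_power2[of M] by linarith
  moreover have "real l * real k \<ge> real l * 3" using assms(1) by (intro mult_left_mono) auto
  then have "18 * M \<ge> 8 * real k * real l + 2 * real k" by (simp add: M_def algebra_simps)
  ultimately have "8 * real k * real l + 2 * real k \<le> real n" by linarith
  then show ?thesis by (metis of_nat_le_iff of_nat_add of_nat_mult of_nat_numeral)
qed

theorem theorem2p9:
  fixes k l n :: nat
  assumes "k \<ge> 3" and "l \<ge> 1"
    and "real n \<ge> 2 * ((real l * (real k - 1) + real k) ^ 4 - 1)
                    / ((real l + 1) * (real k - 1)) - 1"
  shows "px (fst (complete_graph n)) (snd (complete_graph n)) k l = 2"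
proof -
  have big: "8 * k * l + 2 * k \<le> n" using order_bound_linear[OF assms(1,3)] .
  let ?V = "{..<n}" and ?E = "{e. e \<subseteq> {..<n} \<and> card e = 2}"
  have "kl_proper_colouring ?V ?E k l 2 sum_parity"
    using complete_graph_sum_parity_colouring assms(1) big by simp
  moreover have "2 \<le> m" if "kl_proper_colouring ?V ?E k l m c" for m c
    using kl_proper_colouring_ge_2[OF assms(1,2) _ _ that, of "{..<k}"] big by simp
  ultimately show ?thesis
    unfolding px_def complete_graph_def by (intro Least_equality) auto
qed

end
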